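(* Let $S\subseteq[2n]$ with $1\le|S|\le 2n-1$. Let $\mathcal P_S=\{B_{i,j}:i\ne j,\ \{i,j\}\subseteq S\text{ or }\{i,j\}\subseteq[2n]\setminus S\}$ and let $\mathcal O_S=\{\gamma_j:j\in[2n]\setminus S\}$ if $|S|$ is even and $\mathcal O_S=\{\gamma_j:j\in S\}$ if $|S|$ is odd. Then every element of $\mathcal P_S\cup\mathcal O_S$ commutes with $\gamma_S$, and the commutant of $\mathcal P_S\cup\mathcal O_S$ (hence also the commutant of the group of all unitaries generated by braid operators $B_{i,j}$ and single Majoranas $\gamma_j$ that fix $\gamma_S$ under conjugation) equals $\operatorname{Span}(I,\gamma_S)$. Thus the assemblage of degree-$|S|$ Majorana observables is rigidly symmetric under braid and single-Majorana transformations.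
   Context: Let $\gamma_1,\dots,\gamma_{2n}$ be Majorana operators on $(\mathbb C^2)^{\otimes n}$ (Hermitian, $\gamma_j\gamma_{j'}+\gamma_{j'}\gamma_j=2\delta_{jj'}I$); $\gamma_S=i^{\binom m2}\gamma_{j_1}\cdots\gamma_{j_m}$ for $S=\{j_1<\dots<j_m\}$. For $i\ne j$, $B_{i,j}=\frac1{\sqrt2}(I-\gamma_i\gamma_j)$. The commutant of a set of operators is the set of all operators on $(\mathbb C^2)^{\otimes n}$ commuting with each of them. *)

theory Defs
  imports "Jordan_Normal_Form.Schur_Decomposition"
begin

definition majorana_family :: "nat \<Rightarrow> (nat \<Rightarrow> complex mat) \<Rightarrow> bool" where
  "majorana_family n \<gamma> \<longleftrightarrow>
     (\<forall>j\<in>{1..2*n}. \<gamma> j \<in> carrier_mat (2^n) (2^n) \<and> mat_adjoint (\<gamma> j) = \<gamma> j) \<and>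
     (\<forall>j\<in>{1..2*n}. \<forall>j'\<in>{1..2*n}.
        \<gamma> j * \<gamma> j' + \<gamma> j' * \<gamma> j = (if j = j' then 2 \<cdot>\<^sub>m 1\<^sub>m (2^n) else 0\<^sub>m (2^n) (2^n)))"

definition gammaS :: "nat \<Rightarrow> (nat \<Rightarrow> complex mat) \<Rightarrow> nat set \<Rightarrow> complex mat" where
  "gammaS n \<gamma> S = (\<i> ^ (card S choose 2)) \<cdot>\<^sub>m
     foldr (\<lambda>j M. \<gamma> j * M) (sorted_list_of_set S) (1\<^sub>m (2^n))"

definition braid :: "nat \<Rightarrow> (nat \<Rightarrow> complex mat) \<Rightarrow> nat \<Rightarrow> nat \<Rightarrow> complex mat" where
  "braid n \<gamma> i j = complex_of_real (1 / sqrt 2) \<cdot>\<^sub>m (1\<^sub>m (2^n) - \<gamma> i * \<gamma> j)"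

definition commutant :: "nat \<Rightarrow> complex mat set \<Rightarrow> complex mat set" where
  "commutant n X = {A \<in> carrier_mat (2^n) (2^n). \<forall>M\<in>X. A * M = M * A}"

definition P_set :: "nat \<Rightarrow> (nat \<Rightarrow> complex mat) \<Rightarrow> nat set \<Rightarrow> complex mat set" where
  "P_set n \<gamma> S = {braid n \<gamma> i j | i j. i \<noteq> j \<and>
      ({i, j} \<subseteq> S \<or> {i, j} \<subseteq> {1..2*n} - S)}"

definition O_set :: "nat \<Rightarrow> (nat \<Rightarrow> complex mat) \<Rightarrow> nat set \<Rightarrow> complex mat set" where
  "O_set n \<gamma> S = (if even (card S) then \<gamma> ` ({1..2*n} - S) else \<gamma> ` S)"

text \<open>The group generated by all braid operators B_{i,j} (i \<noteq> j in [2n]) and all single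
  Majoranas gamma_j (j in [2n]); the generators are unitary, so the group is generated by
  left multiplication with generators and their adjoints (= inverses).\<close>
definition generators :: "nat \<Rightarrow> (nat \<Rightarrow> complex mat) \<Rightarrow> complex mat set" where
  "generators n \<gamma> = {braid n \<gamma> i j | i j. i \<in> {1..2*n} \<and> j \<in> {1..2*n} \<and> i \<noteq> j}
                    \<union> \<gamma> ` {1..2*n}"

inductive_set gen_group :: "nat \<Rightarrow> (nat \<Rightarrow> complex mat) \<Rightarrow> complex mat set"
  for n \<gamma> where
  gen_one: "1\<^sub>m (2^n) \<in> gen_group n \<gamma>"
| gen_mult: "g \<in> generators n \<gamma> \<Longrightarrow> U \<in> gen_group n \<gamma> \<Longrightarrow> g * U \<in> gen_group n \<gamma>"
| gen_mult_inv: "g \<in> generators n \<gamma> \<Longrightarrow> U \<in> gen_group n \<gamma> \<Longrightarrow> mat_adjoint g * U \<in> gen_group n \<gamma>"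

definition stabilizer :: "nat \<Rightarrow> (nat \<Rightarrow> complex mat) \<Rightarrow> nat set \<Rightarrow> complex mat set" where
  "stabilizer n \<gamma> S = {U \<in> gen_group n \<gamma>. U * gammaS n \<gamma> S * mat_adjoint U = gammaS n \<gamma> S}"

definition span2 :: "nat \<Rightarrow> complex mat \<Rightarrow> complex mat set" where
  "span2 n G = {a \<cdot>\<^sub>m 1\<^sub>m (2^n) + b \<cdot>\<^sub>m G | a b. True}"

end

theory Submission
  imports Defs
begin

text \<open>The 4^n Majorana monomials gamma_T (T a subset of [2n]) satisfy
  tr (gamma_T * gamma_T'^-1) = 2^n if T = T' and 0 otherwise (for T \<noteq> T' some gamma_j
  anticommutes with the product), so they form a basis of the 2^n x 2^n matrices with dual
  basis gamma_T^-1. If A commutes with an invertible h anticommuting with gamma_T^-1, then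
  tr (gamma_T^-1 * A) = 0: the gamma_T-coefficient of A vanishes. For every T other than {} and S,
  P_S \<union> O_S supplies such an h: the braid of a pair i \<in> T, j \<notin> T lying in one block of the
  partition {S, [2n] - S}, or, when T is a union of blocks, a single Majorana from O_S, whose
  choice depends on the parity of |S|. The stabilizer
  contains P_S \<union> O_S and consists of unitaries commuting with gamma_S, so its commutant is
  squeezed between the same two sets.\<close>

lemma smult_smult_mat: "a \<cdot>\<^sub>m (b \<cdot>\<^sub>m A) = (a * b :: 'a::semigroup_mult) \<cdot>\<^sub>m A"
  by (rule eq_matI) (auto simp: mult.assoc)

lemma one_smult_mat [simp]: "(1::'a::monoid_mult) \<cdot>\<^sub>m A = A"
  by (rule eq_matI) auto

definition mat_trace :: "'a::comm_ring_1 mat \<Rightarrow> 'a" where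
  "mat_trace A = (\<Sum>i<dim_row A. A $$ (i, i))"

lemma mat_trace_mult_eq_sum:
  assumes "A \<in> carrier_mat n m" "B \<in> carrier_mat m n"
  shows "mat_trace (A * B) = (\<Sum>(a, b)\<in>{..<n} \<times> {..<m}. A $$ (a, b) * B $$ (b, a))"
  using assms by (simp add: mat_trace_def scalar_prod_def sum.cartesian_product lessThan_atLeast0)

lemma mat_trace_mult_comm:
  assumes "A \<in> carrier_mat n m" "B \<in> carrier_mat m n"
  shows "mat_trace (A * B) = mat_trace (B * A)"
proof -
  have "mat_trace (A * B) = (\<Sum>a<n. \<Sum>b<m. B $$ (b, a) * A $$ (a, b))"
    using assms by (simp add: mat_trace_mult_eq_sum sum.cartesian_product mult.commute)
  also have "\<dots> = mat_trace (B * A)"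
    using assms by (subst sum.swap) (simp add: mat_trace_mult_eq_sum sum.cartesian_product)
  finally show ?thesis .
qed

lemma mat_trace_smult: "A \<in> carrier_mat n n \<Longrightarrow> mat_trace (c \<cdot>\<^sub>m A) = c * mat_trace A"
  by (simp add: mat_trace_def sum_distrib_left)

lemma mat_trace_one: "mat_trace (1\<^sub>m n) = of_nat n"
  by (simp add: mat_trace_def)

lemma mat_trace_eq_zero_if_anticommutes:
  fixes X :: "'a::field_char_0 mat"
  assumes h: "h \<in> carrier_mat n n" and h': "h' \<in> carrier_mat n n" and X: "X \<in> carrier_mat n n"
    and inv: "h' * h = 1\<^sub>m n" and anti: "h * X = (-1) \<cdot>\<^sub>m (X * h)"
  shows "mat_trace X = 0"
proof -
  have "mat_trace X = mat_trace (h' * (h * X))"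
    using inv X by (simp add: assoc_mult_mat[OF h' h X, symmetric])
  also have "\<dots> = mat_trace ((-1) \<cdot>\<^sub>m (X * h) * h')"
    using mat_trace_mult_comm[OF h' mult_carrier_mat[OF h X]] anti by simp
  also have "\<dots> = mat_trace ((-1) \<cdot>\<^sub>m (X * (h * h')))"
    using mult_smult_assoc_mat[OF mult_carrier_mat[OF X h] h'] assoc_mult_mat[OF X h h'] by simp
  also have "\<dots> = - mat_trace X"
    using X mat_mult_left_right_inverse[OF h' h inv] by (simp add: mat_trace_smult)
  finally show ?thesis by simp
qed

lemma mat_mult_eq_smult_one_commute:
  fixes M N :: "'a::field mat"
  assumes M: "M \<in> carrier_mat k k" and N: "N \<in> carrier_mat k k" and c: "c \<noteq> 0"
    and MN: "M * N = c \<cdot>\<^sub>m 1\<^sub>m k"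
  shows "N * M = c \<cdot>\<^sub>m 1\<^sub>m k"
proof -
  have "((1 / c) \<cdot>\<^sub>m M) * N = 1\<^sub>m k"
    using M N c MN by (simp add: mult_smult_assoc_mat smult_smult_mat)
  then have "N * ((1 / c) \<cdot>\<^sub>m M) = 1\<^sub>m k"
    using mat_mult_left_right_inverse[OF smult_carrier_mat[OF M] N] by blast
  moreover have "N * M = c \<cdot>\<^sub>m (N * ((1 / c) \<cdot>\<^sub>m M))"
    using M N c by (simp add: mult_smult_distrib smult_smult_mat)
  ultimately show ?thesis
    by simp
qed

lemma dual_basis_completeness:
  fixes P Q :: "'i \<Rightarrow> 'a::field mat"
  assumes I: "finite I" "card I = d * d"
    and P: "\<And>t. t \<in> I \<Longrightarrow> P t \<in> carrier_mat d d" and Q: "\<And>t. t \<in> I \<Longrightarrow> Q t \<in> carrier_mat d d"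
    and dual: "\<And>t t'. t \<in> I \<Longrightarrow> t' \<in> I \<Longrightarrow> mat_trace (P t * Q t') = (if t = t' then c else 0)"
    and c: "c \<noteq> 0"
    and ab: "a < d" "b < d" and ij: "i < d" "j < d"
  shows "(\<Sum>t\<in>I. Q t $$ (b, a) * P t $$ (i, j)) = (if (a, b) = (i, j) then c else 0)"
proof -
  let ?D = "{..<d} \<times> {..<d}"
  obtain e where e: "bij_betw e {..<d * d} I"
    using ex_bij_betw_nat_finite[OF I(1)] I(2) by (auto simp: atLeast0LessThan)
  obtain v where v: "bij_betw v {..<d * d} ?D"
    using finite_same_card_bij[of "{..<d * d}" ?D] by (auto simp: card_cartesian_product)
  \<comment> \<open>rows of M are the P t and columns of N the transposed Q t, both flattened along v\<close>
  define M where "M = mat (d * d) (d * d) (\<lambda>(s, k). P (e s) $$ v k)"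
  define N where "N = mat (d * d) (d * d) (\<lambda>(k, s). Q (e s) $$ prod.swap (v k))"
  have M: "M \<in> carrier_mat (d * d) (d * d)" and N: "N \<in> carrier_mat (d * d) (d * d)"
    unfolding M_def N_def by auto
  have MN: "M * N = c \<cdot>\<^sub>m 1\<^sub>m (d * d)"
  proof (rule eq_matI)
    fix s s' assume "s < dim_row (c \<cdot>\<^sub>m 1\<^sub>m (d * d))" "s' < dim_col (c \<cdot>\<^sub>m 1\<^sub>m (d * d))"
    then have s: "s < d * d" "s' < d * d" by auto
    then have es: "e s \<in> I" "e s' \<in> I" using e bij_betwE by blast+
    have "(M * N) $$ (s, s') = (\<Sum>k<d * d. P (e s) $$ v k * Q (e s') $$ prod.swap (v k))"
      using s by (simp add: M_def N_def scalar_prod_def lessThan_atLeast0)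
    also have "\<dots> = (\<Sum>(a, b)\<in>?D. P (e s) $$ (a, b) * Q (e s') $$ (b, a))"
      using sum.reindex_bij_betw[OF v, of "\<lambda>(a, b). P (e s) $$ (a, b) * Q (e s') $$ (b, a)"]
      by (simp add: case_prod_beta prod.swap_def)
    also have "\<dots> = mat_trace (P (e s) * Q (e s'))"
      using mat_trace_mult_eq_sum[OF P[OF es(1)] Q[OF es(2)]] by simp
    also have "\<dots> = (c \<cdot>\<^sub>m 1\<^sub>m (d * d)) $$ (s, s')"
      using dual[OF es] s e by (auto simp: bij_betw_def inj_on_def)
    finally show "(M * N) $$ (s, s') = (c \<cdot>\<^sub>m 1\<^sub>m (d * d)) $$ (s, s')" .
  qed (use M N in auto)
  have NM: "N * M = c \<cdot>\<^sub>m 1\<^sub>m (d * d)"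
    by (rule mat_mult_eq_smult_one_commute[OF M N c MN])
  have "(i, j) \<in> v ` {..<d * d}" "(a, b) \<in> v ` {..<d * d}"
    using ab ij bij_betw_imp_surj_on[OF v] by auto
  then obtain k k' where k: "k < d * d" "v k = (i, j)" and k': "k' < d * d" "v k' = (a, b)"
    by (metis imageE lessThan_iff)
  have "(\<Sum>t\<in>I. Q t $$ (b, a) * P t $$ (i, j)) = (\<Sum>s<d * d. Q (e s) $$ (b, a) * P (e s) $$ (i, j))"
    by (rule sum.reindex_bij_betw[OF e, symmetric])
  also have "\<dots> = (\<Sum>s<d * d. N $$ (k', s) * M $$ (s, k))"
    using k k' by (auto simp: M_def N_def intro!: sum.cong)
  also have "\<dots> = (N * M) $$ (k', k)"
    using k k' M N by (simp add: scalar_prod_def lessThan_atLeast0)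
  also have "\<dots> = (if (a, b) = (i, j) then c else 0)"
    using NM k k' v by (auto simp: bij_betw_def inj_on_def)
  finally show ?thesis .
qed

lemma dual_basis_expansion:
  fixes P Q :: "'i \<Rightarrow> 'a::field mat"
  assumes I: "finite I" "card I = d * d"
    and P: "\<And>t. t \<in> I \<Longrightarrow> P t \<in> carrier_mat d d" and Q: "\<And>t. t \<in> I \<Longrightarrow> Q t \<in> carrier_mat d d"
    and dual: "\<And>t t'. t \<in> I \<Longrightarrow> t' \<in> I \<Longrightarrow> mat_trace (P t * Q t') = (if t = t' then c else 0)"
    and c: "c \<noteq> 0"
    and A: "A \<in> carrier_mat d d" and ij: "i < d" "j < d"
  shows "(\<Sum>t\<in>I. mat_trace (Q t * A) * P t $$ (i, j)) = c * A $$ (i, j)"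
proof -
  let ?D = "{..<d} \<times> {..<d}"
  have "(\<Sum>t\<in>I. mat_trace (Q t * A) * P t $$ (i, j))
      = (\<Sum>t\<in>I. \<Sum>(a, b)\<in>?D. A $$ (a, b) * (Q t $$ (b, a) * P t $$ (i, j)))"
    by (intro sum.cong refl)
      (simp add: mat_trace_mult_comm[OF Q A] mat_trace_mult_eq_sum[OF A Q] sum_distrib_right
        case_prod_beta mult.assoc)
  also have "\<dots> = (\<Sum>(a, b)\<in>?D. A $$ (a, b) * (\<Sum>t\<in>I. Q t $$ (b, a) * P t $$ (i, j)))"
    by (subst sum.swap) (simp add: sum_distrib_left case_prod_beta)
  also have "\<dots> = (\<Sum>x\<in>?D. if x = (i, j) then c * A $$ (i, j) else 0)"
    by (intro sum.cong refl)
      (auto simp: dual_basis_completeness[OF I P Q dual c _ _ ij] split: if_splits)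
  also have "\<dots> = c * A $$ (i, j)"
    using ij by (simp add: sum.delta')
  finally show ?thesis .
qed

lemma commute_smult_one_minus_iff:
  fixes A G :: "'a::field mat"
  assumes A: "A \<in> carrier_mat n n" and G: "G \<in> carrier_mat n n" and c: "c \<noteq> 0"
  shows "A * (c \<cdot>\<^sub>m (1\<^sub>m n - G)) = (c \<cdot>\<^sub>m (1\<^sub>m n - G)) * A \<longleftrightarrow> A * G = G * A"
proof -
  have G': "1\<^sub>m n - G \<in> carrier_mat n n"
    using G by (rule minus_carrier_mat)
  have "A * (c \<cdot>\<^sub>m (1\<^sub>m n - G)) = c \<cdot>\<^sub>m (A - A * G)"
    using A mult_smult_distrib[OF A G'] mult_minus_distrib_mat[OF A one_carrier_mat G] by simp
  moreover have "(c \<cdot>\<^sub>m (1\<^sub>m n - G)) * A = c \<cdot>\<^sub>m (A - G * A)"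
    using A mult_smult_assoc_mat[OF G' A] minus_mult_distrib_mat[OF one_carrier_mat G A] by simp
  moreover have "c \<cdot>\<^sub>m (A - A * G) = c \<cdot>\<^sub>m (A - G * A) \<longleftrightarrow> A * G = G * A"
  proof
    assume "c \<cdot>\<^sub>m (A - A * G) = c \<cdot>\<^sub>m (A - G * A)"
    then have "(1 / c) \<cdot>\<^sub>m (c \<cdot>\<^sub>m (A - A * G)) = (1 / c) \<cdot>\<^sub>m (c \<cdot>\<^sub>m (A - G * A))"
      by simp
    then have eq: "A - A * G = A - G * A"
      using c by (simp add: smult_smult_mat)
    show "A * G = G * A"
    proof (rule eq_matI)
      fix a b assume "a < dim_row (G * A)" "b < dim_col (G * A)"
      then show "(A * G) $$ (a, b) = (G * A) $$ (a, b)"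
        using arg_cong[OF eq, of "\<lambda>X. X $$ (a, b)"] A G by simp
    qed (use A G in auto)
  qed simp
  ultimately show ?thesis by simp
qed

lemma sign_commute_mult_left:
  fixes g h X :: "'a::comm_ring_1 mat"
  assumes g: "g \<in> carrier_mat n n" and h: "h \<in> carrier_mat n n" and X: "X \<in> carrier_mat n n"
    and gX: "g * X = s \<cdot>\<^sub>m (X * g)" and hX: "h * X = t \<cdot>\<^sub>m (X * h)"
  shows "(g * h) * X = (s * t) \<cdot>\<^sub>m (X * (g * h))"
proof -
  have "(g * h) * X = t \<cdot>\<^sub>m ((g * X) * h)"
    by (simp add: assoc_mult_mat[OF g h X] hX mult_smult_distrib[OF g mult_carrier_mat[OF X h]]
        assoc_mult_mat[OF g X h])
  also have "\<dots> = (s * t) \<cdot>\<^sub>m (X * (g * h))"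
    by (simp add: gX mult_smult_assoc_mat[OF mult_carrier_mat[OF X g] h] assoc_mult_mat[OF X g h]
        smult_smult_mat mult.commute)
  finally show ?thesis .
qed

lemma sign_commute_mult_right:
  fixes g X Y :: "'a::comm_ring_1 mat"
  assumes g: "g \<in> carrier_mat n n" and X: "X \<in> carrier_mat n n" and Y: "Y \<in> carrier_mat n n"
    and gX: "g * X = s \<cdot>\<^sub>m (X * g)" and gY: "g * Y = t \<cdot>\<^sub>m (Y * g)"
  shows "g * (X * Y) = (s * t) \<cdot>\<^sub>m ((X * Y) * g)"
proof -
  have "g * (X * Y) = s \<cdot>\<^sub>m (X * (g * Y))"
    by (simp add: assoc_mult_mat[OF g X Y, symmetric] gX mult_smult_assoc_mat[OF mult_carrier_mat[OF X g] Y]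
        assoc_mult_mat[OF X g Y])
  also have "\<dots> = (s * t) \<cdot>\<^sub>m ((X * Y) * g)"
    by (simp add: gY mult_smult_distrib[OF X mult_carrier_mat[OF Y g]] assoc_mult_mat[OF X Y g]
        smult_smult_mat)
  finally show ?thesis .
qed

lemma mat_trace_eq_zero_if_commutes_anticommutes:
  fixes A :: "'a::field_char_0 mat"
  assumes h: "h \<in> carrier_mat n n" and h': "h' \<in> carrier_mat n n" and inv: "h' * h = 1\<^sub>m n"
    and Q: "Q \<in> carrier_mat n n" and A: "A \<in> carrier_mat n n"
    and anti: "h * Q = (-1) \<cdot>\<^sub>m (Q * h)" and comm: "A * h = h * A"
  shows "mat_trace (Q * A) = 0"
proof (rule mat_trace_eq_zero_if_anticommutes[OF h h' _ inv])
  have "h * A = 1 \<cdot>\<^sub>m (A * h)"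
    using comm by simp
  then show "h * (Q * A) = (-1) \<cdot>\<^sub>m (Q * A * h)"
    using sign_commute_mult_right[OF h Q A anti] by simp
qed (use Q A in simp)

lemma mat_adjoint_dim [simp]:
  "dim_row (mat_adjoint A) = dim_col A" "dim_col (mat_adjoint A) = dim_row A"
  by (simp_all add: mat_adjoint_def mat_of_rows_def)

lemma mat_adjoint_carrier [simp]: "mat_adjoint A \<in> carrier_mat m n \<longleftrightarrow> A \<in> carrier_mat n m"
  unfolding carrier_mat_def by auto

lemma mat_adjoint_index:
  "A \<in> carrier_mat n m \<Longrightarrow> i < m \<Longrightarrow> j < n \<Longrightarrow> mat_adjoint A $$ (i, j) = conjugate (A $$ (j, i))"
  unfolding mat_adjoint_def by (simp add: mat_of_rows_def)

lemma mat_adjoint_adjoint: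
  assumes A: "A \<in> carrier_mat n m"
  shows "mat_adjoint (mat_adjoint A) = A"
proof (rule eq_matI)
  fix i j assume "i < dim_row A" "j < dim_col A"
  then show "mat_adjoint (mat_adjoint A) $$ (i, j) = A $$ (i, j)"
    using A mat_adjoint_index[of "mat_adjoint A" m n i j] mat_adjoint_index[OF A, of j i] by simp
qed simp_all

lemma mat_adjoint_one: "mat_adjoint (1\<^sub>m n :: 'a::conjugatable_field mat) = 1\<^sub>m n"
proof -
  have "conjugate (1::'a) = 1"
  proof -
    have "conjugate (1::'a) * conjugate 1 = conjugate 1 * 1"
      by (subst conjugate_dist_mul[symmetric]) simp
    moreover have "conjugate (1::'a) \<noteq> 0"
      by simp
    ultimately show ?thesis
      using mult_left_cancel by blast
  qed
  then show ?thesis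
    by (intro eq_matI) (auto simp: mat_adjoint_index[of _ n n])
qed

lemma mat_adjoint_mult:
  fixes A B :: "'a::conjugatable_field mat"
  assumes A: "A \<in> carrier_mat n m" and B: "B \<in> carrier_mat m k"
  shows "mat_adjoint (A * B) = mat_adjoint B * mat_adjoint A"
proof (rule eq_matI)
  fix i j assume "i < dim_row (mat_adjoint B * mat_adjoint A)" "j < dim_col (mat_adjoint B * mat_adjoint A)"
  then have i: "i < k" and j: "j < n" using A B by auto
  have "mat_adjoint (A * B) $$ (i, j) = conjugate (\<Sum>l<m. A $$ (j, l) * B $$ (l, i))"
    using A B i j by (simp add: mat_adjoint_index[of _ n k] scalar_prod_def lessThan_atLeast0)
  also have "\<dots> = (\<Sum>l<m. conjugate (B $$ (l, i)) * conjugate (A $$ (j, l)))"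
    by (simp add: sum_conjugate conjugate_dist_mul mult.commute)
  also have "\<dots> = (mat_adjoint B * mat_adjoint A) $$ (i, j)"
    using A B i j by (auto simp: mat_adjoint_index[of _ m k] mat_adjoint_index[of _ n m]
        scalar_prod_def lessThan_atLeast0 intro!: sum.cong)
  finally show "mat_adjoint (A * B) $$ (i, j) = (mat_adjoint B * mat_adjoint A) $$ (i, j)" .
qed (use A B in auto)

lemma unitary_smult_one_minus:
  fixes X :: "complex mat"
  defines "c \<equiv> complex_of_real (1 / sqrt 2)"
  assumes X: "X \<in> carrier_mat n n" and sq: "X * X = (-1) \<cdot>\<^sub>m 1\<^sub>m n"
    and adj: "mat_adjoint X = (-1) \<cdot>\<^sub>m X"
  shows "mat_adjoint (c \<cdot>\<^sub>m (1\<^sub>m n - X)) * (c \<cdot>\<^sub>m (1\<^sub>m n - X)) = 1\<^sub>m n"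
proof -
  define Y where "Y = (-1) \<cdot>\<^sub>m X"
  have Y: "Y \<in> carrier_mat n n" using X by (simp add: Y_def)
  have B: "c \<cdot>\<^sub>m (1\<^sub>m n - X) \<in> carrier_mat n n"
    by (intro smult_carrier_mat minus_carrier_mat X)
  have "mat_adjoint (c \<cdot>\<^sub>m (1\<^sub>m n - X)) = c \<cdot>\<^sub>m (1\<^sub>m n - Y)"
  proof (rule eq_matI)
    fix i j assume "i < dim_row (c \<cdot>\<^sub>m (1\<^sub>m n - Y))" "j < dim_col (c \<cdot>\<^sub>m (1\<^sub>m n - Y))"
    then have ij: "i < n" "j < n" using Y by auto
    have "cnj (X $$ (j, i)) = Y $$ (i, j)"
      using mat_adjoint_index[OF X ij] adj ij X by (simp add: Y_def)
    then show "mat_adjoint (c \<cdot>\<^sub>m (1\<^sub>m n - X)) $$ (i, j) = (c \<cdot>\<^sub>m (1\<^sub>m n - Y)) $$ (i, j)"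
      using ij X Y unfolding mat_adjoint_index[OF B ij] by (simp add: c_def)
  qed (use X Y in auto)
  moreover have "(1\<^sub>m n - Y) * (1\<^sub>m n - X) = 2 \<cdot>\<^sub>m 1\<^sub>m n"
  proof -
    have YX: "Y * X = 1\<^sub>m n"
      using X sq by (simp add: Y_def mult_smult_assoc_mat smult_smult_mat)
    have "(1\<^sub>m n - Y) * (1\<^sub>m n - X) = (1\<^sub>m n - Y) - (X - 1\<^sub>m n)"
      using mult_minus_distrib_mat[OF minus_carrier_mat[OF Y] one_carrier_mat X]
        minus_mult_distrib_mat[OF one_carrier_mat Y X] X Y YX by simp
    also have "\<dots> = 2 \<cdot>\<^sub>m 1\<^sub>m n"
      by (rule eq_matI) (use X in \<open>auto simp: Y_def\<close>)
    finally show ?thesis .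
  qed
  moreover have "c * c * 2 = 1"
    unfolding c_def by (simp flip: of_real_mult)
  moreover have "(c \<cdot>\<^sub>m (1\<^sub>m n - Y)) * (c \<cdot>\<^sub>m (1\<^sub>m n - X)) = (c * c) \<cdot>\<^sub>m ((1\<^sub>m n - Y) * (1\<^sub>m n - X))"
    using mult_smult_assoc_mat[OF minus_carrier_mat[OF Y] smult_carrier_mat[OF minus_carrier_mat[OF X]]]
      mult_smult_distrib[OF minus_carrier_mat[OF Y] minus_carrier_mat[OF X]]
    by (simp add: smult_smult_mat)
  ultimately show ?thesis
    by (simp add: smult_smult_mat)
qed

lemma conj_fixed_iff_commute:
  fixes U G :: "'a::conjugatable_field mat"
  assumes U: "U \<in> carrier_mat n n" and G: "G \<in> carrier_mat n n" and unit: "mat_adjoint U * U = 1\<^sub>m n"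
  shows "U * G * mat_adjoint U = G \<longleftrightarrow> U * G = G * U"
proof -
  have U': "mat_adjoint U \<in> carrier_mat n n" using U by simp
  have unit': "U * mat_adjoint U = 1\<^sub>m n"
    using mat_mult_left_right_inverse[OF U' U unit] .
  show ?thesis
  proof
    assume fixed: "U * G * mat_adjoint U = G"
    have "U * G = U * G * (mat_adjoint U * U)"
      using U G by (simp add: unit)
    also have "\<dots> = (U * G * mat_adjoint U) * U"
      using assoc_mult_mat[OF mult_carrier_mat[OF U G] U' U] by simp
    finally show "U * G = G * U" by (simp add: fixed)
  next
    assume comm: "U * G = G * U"
    have "U * G * mat_adjoint U = G * (U * mat_adjoint U)"
      using assoc_mult_mat[OF G U U'] by (simp add: comm)
    then show "U * G * mat_adjoint U = G"
      using G by (simp add: unit')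
  qed
qed

lemma commutant_antimono: "X \<subseteq> Y \<Longrightarrow> commutant n Y \<subseteq> commutant n X"
  unfolding commutant_def by blast

lemma span2_subset_commutant:
  assumes G: "G \<in> carrier_mat (2^n) (2^n)"
    and X: "\<And>M. M \<in> X \<Longrightarrow> M \<in> carrier_mat (2^n) (2^n) \<and> M * G = G * M"
  shows "span2 n G \<subseteq> commutant n X"
proof
  fix A assume "A \<in> span2 n G"
  then obtain a b where A: "A = a \<cdot>\<^sub>m 1\<^sub>m (2^n) + b \<cdot>\<^sub>m G"
    unfolding span2_def by blast
  have "A * M = M * A" if "M \<in> X" for M
  proof -
    have M: "M \<in> carrier_mat (2^n) (2^n)" and MG: "M * G = G * M"
      using X[OF that] by auto
    have "A * M = a \<cdot>\<^sub>m M + b \<cdot>\<^sub>m (G * M)"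
      unfolding A using M G
      by (simp add: add_mult_distrib_mat[of _ "2^n" "2^n"] mult_smult_assoc_mat[OF one_carrier_mat M]
          mult_smult_assoc_mat[OF G M])
    also have "\<dots> = M * A"
      unfolding A using M G
        mult_add_distrib_mat[OF M smult_carrier_mat[OF one_carrier_mat] smult_carrier_mat[OF G]]
      by (simp add: mult_smult_distrib[OF M one_carrier_mat] mult_smult_distrib[OF M G] MG)
    finally show ?thesis .
  qed
  then show "A \<in> commutant n X"
    unfolding commutant_def A using G by auto
qed

lemma span2_smult:
  assumes "z \<noteq> 0"
  shows "span2 n (z \<cdot>\<^sub>m G) = span2 n G"
proof (intro equalityI subsetI)
  fix A assume "A \<in> span2 n (z \<cdot>\<^sub>m G)"
  then obtain a b where "A = a \<cdot>\<^sub>m 1\<^sub>m (2^n) + (b * z) \<cdot>\<^sub>m G"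
    unfolding span2_def by (auto simp: smult_smult_mat)
  then show "A \<in> span2 n G"
    unfolding span2_def by blast
next
  fix A assume "A \<in> span2 n G"
  then obtain a b where "A = a \<cdot>\<^sub>m 1\<^sub>m (2^n) + (b / z) \<cdot>\<^sub>m (z \<cdot>\<^sub>m G)"
    unfolding span2_def using assms by (auto simp: smult_smult_mat)
  then show "A \<in> span2 n (z \<cdot>\<^sub>m G)"
    unfolding span2_def by blast
qed

lemma card_remove_plus_of_bool:
  assumes "finite T"
  shows "card (T - {j}) + of_bool (j \<in> T) = card T"
proof (cases "j \<in> T")
  case True
  then show ?thesis
    using card_Suc_Diff1[OF assms True] by simp
qed simp

lemma odd_card_remove_sum_iff:
  assumes "finite T" "finite T'"
  shows "odd (card (T - {j}) + card (T' - {j}))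
     \<longleftrightarrow> odd (card T + card T' + of_bool (j \<in> T) + of_bool (j \<in> T'))"
  using card_remove_plus_of_bool[OF assms(1), of j] card_remove_plus_of_bool[OF assms(2), of j]
  by presburger

lemma exists_odd_card_remove_sum:
  assumes U: "finite U" "even (card U)" and T: "T \<subseteq> U" "T' \<subseteq> U" "T \<noteq> T'"
  shows "\<exists>j\<in>U. odd (card (T - {j}) + card (T' - {j}))"
proof -
  have fin: "finite T" "finite T'"
    using U T finite_subset by blast+
  show ?thesis
  proof (cases "even (card T + card T')")
    case True
    obtain j where j: "j \<in> T \<and> j \<notin> T' \<or> j \<in> T' \<and> j \<notin> T"
      using T(3) by blast
    then have "odd (card (T - {j}) + card (T' - {j}))"
      using True fin by (auto simp: odd_card_remove_sum_iff[OF fin] card_0_eq)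
    then show ?thesis
      using j T by blast
  next
    case False
    \<comment> \<open>otherwise T and T' would partition U, whose cardinality is even\<close>
    have "\<exists>j\<in>U. j \<in> T \<inter> T' \<or> j \<notin> T \<union> T'"
    proof (rule ccontr)
      assume "\<not> ?thesis"
      then have "T \<inter> T' = {}" "T \<union> T' = U"
        using T by auto
      then show False
        using False U fin card_Un_disjoint[of T T'] by simp
    qed
    then obtain j where j: "j \<in> U" "j \<in> T \<inter> T' \<or> j \<notin> T \<union> T'"
      by blast
    then have "odd (card (T - {j}) + card (T' - {j}))"
      using False fin by (auto simp: odd_card_remove_sum_iff[OF fin] card_0_eq)
    then show ?thesis
      using j by blast
  qed
qed

lemma odd_card_remove_in_out:
  assumes "finite T" "i \<in> T" "j \<notin> T"
  shows "odd (card (T - {i}) + card (T - {j}))"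
proof -
  have "card (T - {i}) + 1 = card T" "card (T - {j}) = card T"
    using assms card_remove_plus_of_bool[OF assms(1), of i] by auto
  then show ?thesis
    by presburger
qed

lemma unseparated_imp_union_of_blocks:
  assumes S: "S \<subseteq> U" and T: "T \<subseteq> U" "T \<noteq> {}" "T \<noteq> S"
    and no_pair: "\<not> (\<exists>i\<in>T. \<exists>j. j \<notin> T \<and> ({i, j} \<subseteq> S \<or> {i, j} \<subseteq> U - S))"
  shows "T = U - S \<or> T = U"
proof -
  have "T \<inter> S = {} \<or> S \<subseteq> T" "T \<inter> (U - S) = {} \<or> U - S \<subseteq> T"
    using no_pair by blast+
  then show ?thesis
    using S T by blast
qed

lemma separating_pair_or_index:
  assumes U: "finite U" "even (card U)" and S: "S \<subseteq> U" "S \<noteq> {}" "S \<noteq> U"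
    and T: "T \<subseteq> U" "T \<noteq> {}" "T \<noteq> S"
  shows "(\<exists>i\<in>T. \<exists>j. j \<notin> T \<and> ({i, j} \<subseteq> S \<or> {i, j} \<subseteq> U - S))
       \<or> (\<exists>j \<in> (if even (card S) then U - S else S). odd (card (T - {j})))"
proof (cases "\<exists>i\<in>T. \<exists>j. j \<notin> T \<and> ({i, j} \<subseteq> S \<or> {i, j} \<subseteq> U - S)")
  case False
  then have TU: "T = U - S \<or> T = U"
    using unseparated_imp_union_of_blocks[OF S(1) T] by blast
  define W where "W = (if even (card S) then U - S else S)"
  have "W \<noteq> {}"
    using S unfolding W_def by (auto simp: Diff_eq_empty_iff dest: subset_antisym)
  then obtain j where j: "j \<in> W"
    by blast
  have fin: "finite S" "finite T"
    using U S T finite_subset by blast+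
  have cards: "card (U - S) + card S = card U" "card U \<ge> 1"
    using U S fin card_Diff_subset[OF fin(1) S(1)] card_mono[OF U(1) S(1)] card_0_eq[OF U(1)]
    by auto
  have "odd (card (T - {j}))"
  proof (cases "even (card S)")
    case True
    then have "j \<in> T" "card (T - {j}) + 1 = card T"
      using j TU card_remove_plus_of_bool[OF fin(2), of j] unfolding W_def by auto
    then show ?thesis
      using TU True U(2) cards by auto presburger+
  next
    case False
    then have "card (T - {j}) + of_bool (j \<in> T) = card T" "j \<in> S" "j \<in> U"
      using j S(1) card_remove_plus_of_bool[OF fin(2), of j] unfolding W_def by auto
    then show ?thesis
      using TU False U(2) cards by auto presburger
  qed
  then show ?thesis
    using j unfolding W_def by blast
qed blast

lemma P_O_set_cases:
  assumes "M \<in> P_set n \<gamma> S \<union> O_set n \<gamma> S"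
  obtains (braid) i j where "i \<noteq> j" "{i, j} \<subseteq> S \<or> {i, j} \<subseteq> {1..2*n} - S" "M = braid n \<gamma> i j"
    | (single) j where "j \<in> (if even (card S) then {1..2*n} - S else S)" "M = \<gamma> j"
  using assms unfolding P_set_def O_set_def by (auto split: if_splits)

locale majorana =
  fixes n :: nat and \<gamma> :: "nat \<Rightarrow> complex mat"
  assumes family: "majorana_family n \<gamma>"
begin

abbreviation d :: nat where "d \<equiv> 2^n"

lemma gamma_carrier: "j \<in> {1..2*n} \<Longrightarrow> \<gamma> j \<in> carrier_mat d d"
  using family unfolding majorana_family_def by blast

lemma gamma_adjoint: "j \<in> {1..2*n} \<Longrightarrow> mat_adjoint (\<gamma> j) = \<gamma> j"
  using family unfolding majorana_family_def by blast

lemma gamma_anticommutator: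
  "j \<in> {1..2*n} \<Longrightarrow> k \<in> {1..2*n} \<Longrightarrow>
     \<gamma> j * \<gamma> k + \<gamma> k * \<gamma> j = (if j = k then 2 \<cdot>\<^sub>m 1\<^sub>m d else 0\<^sub>m d d)"
  using family unfolding majorana_family_def by blast

lemma gamma_square:
  assumes j: "j \<in> {1..2*n}"
  shows "\<gamma> j * \<gamma> j = 1\<^sub>m d"
proof (rule eq_matI)
  fix a b assume ab: "a < dim_row (1\<^sub>m d :: complex mat)" "b < dim_col (1\<^sub>m d :: complex mat)"
  have "(\<gamma> j * \<gamma> j + \<gamma> j * \<gamma> j) $$ (a, b) = (2 \<cdot>\<^sub>m 1\<^sub>m d) $$ (a, b)"
    using gamma_anticommutator[OF j j] by simp
  then show "(\<gamma> j * \<gamma> j) $$ (a, b) = 1\<^sub>m d $$ (a, b)"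
    using ab gamma_carrier[OF j] by simp
qed (use gamma_carrier[OF j] in auto)

lemma gamma_anticommute:
  assumes j: "j \<in> {1..2*n}" and k: "k \<in> {1..2*n}" and jk: "j \<noteq> k"
  shows "\<gamma> j * \<gamma> k = (-1) \<cdot>\<^sub>m (\<gamma> k * \<gamma> j)"
proof (rule eq_matI)
  fix a b assume ab: "a < dim_row ((-1) \<cdot>\<^sub>m (\<gamma> k * \<gamma> j))" "b < dim_col ((-1) \<cdot>\<^sub>m (\<gamma> k * \<gamma> j))"
  have "(\<gamma> j * \<gamma> k + \<gamma> k * \<gamma> j) $$ (a, b) = 0\<^sub>m d d $$ (a, b)"
    using gamma_anticommutator[OF j k] jk by simp
  then show "(\<gamma> j * \<gamma> k) $$ (a, b) = ((-1) \<cdot>\<^sub>m (\<gamma> k * \<gamma> j)) $$ (a, b)"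
    using ab gamma_carrier[OF j] gamma_carrier[OF k] by (simp add: add_eq_0_iff)
qed (use gamma_carrier[OF j] gamma_carrier[OF k] in auto)

definition gamma_prod :: "nat list \<Rightarrow> complex mat" where
  "gamma_prod L = foldr (\<lambda>j M. \<gamma> j * M) L (1\<^sub>m d)"

lemma gamma_prod_Nil [simp]: "gamma_prod [] = 1\<^sub>m d"
  and gamma_prod_Cons [simp]: "gamma_prod (j # L) = \<gamma> j * gamma_prod L"
  by (simp_all add: gamma_prod_def)

lemma gamma_prod_carrier: "set L \<subseteq> {1..2*n} \<Longrightarrow> gamma_prod L \<in> carrier_mat d d"
proof (induction L)
  case (Cons j L)
  then show ?case
    using gamma_carrier[of j] by (auto intro: mult_carrier_mat)
qed simp

lemma gamma_prod_append:
  "set L \<subseteq> {1..2*n} \<Longrightarrow> set K \<subseteq> {1..2*n} \<Longrightarrow> gamma_prod (L @ K) = gamma_prod L * gamma_prod K"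
proof (induction L)
  case (Cons j L)
  then show ?case
    using gamma_carrier[of j] gamma_prod_carrier[of L] gamma_prod_carrier[of K] by (simp add: assoc_mult_mat)
next
  case Nil
  then show ?case
    using gamma_prod_carrier[OF Nil(2)] by simp
qed

lemma gamma_commute_gamma_prod:
  assumes L: "set L \<subseteq> {1..2*n}" and j: "j \<in> {1..2*n}"
  shows "\<gamma> j * gamma_prod L = (-1) ^ length (filter (\<lambda>x. x \<noteq> j) L) \<cdot>\<^sub>m (gamma_prod L * \<gamma> j)"
  using L
proof (induction L)
  case Nil
  then show ?case
    using gamma_carrier[OF j] by simp
next
  case (Cons x L)
  have x: "x \<in> {1..2*n}" and L: "set L \<subseteq> {1..2*n}"
    using Cons.prems by auto
  have "\<gamma> j * \<gamma> x = (if x = j then 1 else -1) \<cdot>\<^sub>m (\<gamma> x * \<gamma> j)"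
    using gamma_anticommute[OF j x] gamma_carrier[OF j] by auto
  from sign_commute_mult_right[OF gamma_carrier[OF j] gamma_carrier[OF x] gamma_prod_carrier[OF L]
      this Cons.IH[OF L]]
  show ?case
    by simp
qed

lemma gamma_prod_rev_mult: "set L \<subseteq> {1..2*n} \<Longrightarrow> gamma_prod (rev L) * gamma_prod L = 1\<^sub>m d"
proof (induction L)
  case (Cons j L)
  have j: "j \<in> {1..2*n}" and L: "set L \<subseteq> {1..2*n}"
    using Cons.prems by auto
  note carriers = gamma_carrier[OF j] gamma_prod_carrier[OF L] gamma_prod_carrier[of "rev L"]
  have "gamma_prod (rev (j # L)) * gamma_prod (j # L) = gamma_prod (rev L) * ((\<gamma> j * \<gamma> j) * gamma_prod L)"
    using gamma_prod_append[of "rev L" "[j]"] L j carriers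
    by (simp add: assoc_mult_mat[of _ d d _ d _ d])
  then show ?case
    using Cons.IH[OF L] carriers L by (simp add: gamma_square[OF j])
qed simp

definition monomial :: "nat set \<Rightarrow> complex mat" where
  "monomial T = gamma_prod (sorted_list_of_set T)"

definition monomial_inv :: "nat set \<Rightarrow> complex mat" where
  "monomial_inv T = gamma_prod (rev (sorted_list_of_set T))"

lemma set_sorted_list_subset: "T \<subseteq> {1..2*n} \<Longrightarrow> set (sorted_list_of_set T) \<subseteq> {1..2*n}"
  using finite_subset[of T "{1..2*n}"] by auto

lemma monomial_carrier: "T \<subseteq> {1..2*n} \<Longrightarrow> monomial T \<in> carrier_mat d d"
  unfolding monomial_def by (intro gamma_prod_carrier set_sorted_list_subset)

lemma monomial_inv_carrier: "T \<subseteq> {1..2*n} \<Longrightarrow> monomial_inv T \<in> carrier_mat d d"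
  unfolding monomial_inv_def using set_sorted_list_subset by (intro gamma_prod_carrier) auto

lemma monomial_mult_inv: "T \<subseteq> {1..2*n} \<Longrightarrow> monomial T * monomial_inv T = 1\<^sub>m d"
  unfolding monomial_def monomial_inv_def
  using mat_mult_left_right_inverse[OF _ _ gamma_prod_rev_mult] gamma_prod_carrier set_sorted_list_subset
  by (metis set_rev)

lemma monomial_empty: "monomial {} = 1\<^sub>m d"
  by (simp add: monomial_def)

lemma gammaS_eq_monomial: "gammaS n \<gamma> S = (\<i> ^ (card S choose 2)) \<cdot>\<^sub>m monomial S"
  by (simp add: gammaS_def monomial_def gamma_prod_def)

lemma gamma_commute_monomial:
  assumes "T \<subseteq> {1..2*n}" "j \<in> {1..2*n}"
  shows "\<gamma> j * monomial T = (-1) ^ card (T - {j}) \<cdot>\<^sub>m (monomial T * \<gamma> j)"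
proof -
  have "length (filter (\<lambda>x. x \<noteq> j) (sorted_list_of_set T)) = card (T - {j})"
    using finite_subset[OF assms(1)] by (simp add: distinct_length_filter Int_commute Diff_eq Compl_eq)
  then show ?thesis
    using gamma_commute_gamma_prod[OF set_sorted_list_subset[OF assms(1)] assms(2)]
    by (simp add: monomial_def)
qed

lemma gamma_commute_monomial_inv:
  assumes "T \<subseteq> {1..2*n}" "j \<in> {1..2*n}"
  shows "\<gamma> j * monomial_inv T = (-1) ^ card (T - {j}) \<cdot>\<^sub>m (monomial_inv T * \<gamma> j)"
proof -
  have "length (filter (\<lambda>x. x \<noteq> j) (rev (sorted_list_of_set T))) = card (T - {j})"
    using finite_subset[OF assms(1)]
    by (simp add: rev_filter[symmetric] distinct_length_filter Int_commute Diff_eq Compl_eq)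
  then show ?thesis
    using gamma_commute_gamma_prod[of "rev (sorted_list_of_set T)" j] set_sorted_list_subset[OF assms(1)]
      assms(2)
    by (simp add: monomial_inv_def)
qed

lemma mat_trace_monomial_mult_inv:
  assumes T: "T \<subseteq> {1..2*n}" and T': "T' \<subseteq> {1..2*n}"
  shows "mat_trace (monomial T * monomial_inv T') = (if T = T' then of_nat d else 0)"
proof (cases "T = T'")
  case True
  then show ?thesis
    using monomial_mult_inv[OF T'] by (simp add: mat_trace_one)
next
  case False
  have "\<exists>j\<in>{1..2*n}. odd (card (T - {j}) + card (T' - {j}))"
    by (rule exists_odd_card_remove_sum[OF _ _ T T' False]) simp_all
  then obtain j where j: "j \<in> {1..2*n}" and odd: "odd (card (T - {j}) + card (T' - {j}))"
    by blast
  have "\<gamma> j * (monomial T * monomial_inv T') = (-1) \<cdot>\<^sub>m ((monomial T * monomial_inv T') * \<gamma> j)"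
    using sign_commute_mult_right[OF gamma_carrier[OF j] monomial_carrier[OF T] monomial_inv_carrier[OF T']
        gamma_commute_monomial[OF T j] gamma_commute_monomial_inv[OF T' j]] odd
    by (simp add: power_add[symmetric])
  then have "mat_trace (monomial T * monomial_inv T') = 0"
    by (rule mat_trace_eq_zero_if_anticommutes[OF gamma_carrier[OF j] gamma_carrier[OF j]
          mult_carrier_mat[OF monomial_carrier[OF T] monomial_inv_carrier[OF T']] gamma_square[OF j]])
  then show ?thesis
    using False by simp
qed

lemma monomial_expansion:
  assumes A: "A \<in> carrier_mat d d" and ij: "i < d" "j < d"
  shows "(\<Sum>T\<in>Pow {1..2*n}. mat_trace (monomial_inv T * A) * monomial T $$ (i, j)) = of_nat d * A $$ (i, j)"
proof (rule dual_basis_expansion[OF _ _ _ _ mat_trace_monomial_mult_inv _ A ij])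
  show "card (Pow {1..2*n}) = d * d"
    by (simp add: card_Pow power_add[symmetric] mult_2)
qed (simp_all add: monomial_carrier monomial_inv_carrier)

lemma gamma_pair_inverse:
  assumes "i \<in> {1..2*n}" "j \<in> {1..2*n}"
  shows "(\<gamma> j * \<gamma> i) * (\<gamma> i * \<gamma> j) = 1\<^sub>m d"
proof -
  note g = gamma_carrier[OF assms(1)] gamma_carrier[OF assms(2)]
  have "(\<gamma> j * \<gamma> i) * (\<gamma> i * \<gamma> j) = \<gamma> j * ((\<gamma> i * \<gamma> i) * \<gamma> j)"
    by (simp only: assoc_mult_mat[OF g(2) g(1) mult_carrier_mat[OF g]] assoc_mult_mat[OF g(1) g(1) g(2)])
  also have "\<dots> = 1\<^sub>m d"
    by (simp only: gamma_square assms left_mult_one_mat[OF g(2)])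
  finally show ?thesis .
qed

lemma gamma_pair_square:
  assumes i: "i \<in> {1..2*n}" and j: "j \<in> {1..2*n}" and ij: "i \<noteq> j"
  shows "(\<gamma> i * \<gamma> j) * (\<gamma> i * \<gamma> j) = (-1) \<cdot>\<^sub>m 1\<^sub>m d"
  using gamma_anticommute[OF i j ij] gamma_pair_inverse[OF i j]
    mult_smult_assoc_mat[OF mult_carrier_mat[OF gamma_carrier[OF j] gamma_carrier[OF i]]
      mult_carrier_mat[OF gamma_carrier[OF i] gamma_carrier[OF j]]]
  by simp

lemma gamma_pair_adjoint:
  assumes i: "i \<in> {1..2*n}" and j: "j \<in> {1..2*n}" and ij: "i \<noteq> j"
  shows "mat_adjoint (\<gamma> i * \<gamma> j) = (-1) \<cdot>\<^sub>m (\<gamma> i * \<gamma> j)"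
  using mat_adjoint_mult[OF gamma_carrier[OF i] gamma_carrier[OF j]] gamma_adjoint[OF i] gamma_adjoint[OF j]
    gamma_anticommute[OF j i] ij by simp

lemma braid_carrier: "i \<in> {1..2*n} \<Longrightarrow> j \<in> {1..2*n} \<Longrightarrow> braid n \<gamma> i j \<in> carrier_mat d d"
  unfolding braid_def by (intro smult_carrier_mat minus_carrier_mat mult_carrier_mat[OF gamma_carrier gamma_carrier])

lemma braid_unitary:
  assumes "i \<in> {1..2*n}" "j \<in> {1..2*n}" "i \<noteq> j"
  shows "mat_adjoint (braid n \<gamma> i j) * braid n \<gamma> i j = 1\<^sub>m d"
  unfolding braid_def
  by (rule unitary_smult_one_minus[OF mult_carrier_mat[OF gamma_carrier gamma_carrier]
        gamma_pair_square gamma_pair_adjoint]) (use assms in auto)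

lemma generator_unitary:
  assumes "g \<in> generators n \<gamma>"
  shows "g \<in> carrier_mat d d \<and> mat_adjoint g * g = 1\<^sub>m d"
  using assms unfolding generators_def
  by (auto simp: braid_carrier braid_unitary gamma_carrier gamma_adjoint gamma_square)

lemma gen_group_unitary:
  assumes "U \<in> gen_group n \<gamma>"
  shows "U \<in> carrier_mat d d \<and> mat_adjoint U * U = 1\<^sub>m d"
  using assms
proof (induction rule: gen_group.induct)
  case gen_one
  then show ?case
    by (simp add: mat_adjoint_one)
next
  case (gen_mult g U)
  have g: "g \<in> carrier_mat d d" "mat_adjoint g * g = 1\<^sub>m d"
    using generator_unitary[OF gen_mult.hyps(1)] by auto
  have U: "U \<in> carrier_mat d d" "mat_adjoint U * U = 1\<^sub>m d"
    using gen_mult.IH by auto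
  have "mat_adjoint (g * U) * (g * U) = mat_adjoint U * ((mat_adjoint g * g) * U)"
    using g(1) U(1) by (simp add: mat_adjoint_mult[of _ d d _ d] assoc_mult_mat[of _ d d _ d _ d])
  then show ?case
    using g U by simp
next
  case (gen_mult_inv g U)
  have g: "g \<in> carrier_mat d d" "g * mat_adjoint g = 1\<^sub>m d"
    using generator_unitary[OF gen_mult_inv.hyps(1)] mat_mult_left_right_inverse[of "mat_adjoint g" d g]
    by auto
  have U: "U \<in> carrier_mat d d" "mat_adjoint U * U = 1\<^sub>m d"
    using gen_mult_inv.IH by auto
  have "mat_adjoint (mat_adjoint g * U) * (mat_adjoint g * U) = mat_adjoint U * ((g * mat_adjoint g) * U)"
    using g(1) U(1)
    by (simp add: mat_adjoint_mult[of _ d d _ d] mat_adjoint_adjoint assoc_mult_mat[of _ d d _ d _ d])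
  then show ?case
    using g U by simp
qed

lemma P_O_set_subset_generators:
  assumes "S \<subseteq> {1..2*n}"
  shows "P_set n \<gamma> S \<union> O_set n \<gamma> S \<subseteq> generators n \<gamma>"
proof
  fix M assume "M \<in> P_set n \<gamma> S \<union> O_set n \<gamma> S"
  then show "M \<in> generators n \<gamma>"
  proof (cases rule: P_O_set_cases)
    case (braid i j)
    then have "i \<in> {1..2*n}" "j \<in> {1..2*n}"
      using assms by auto
    then show ?thesis
      using braid unfolding generators_def by blast
  next
    case (single j)
    then show ?thesis
      using assms unfolding generators_def by (auto split: if_splits)
  qed
qed

lemma braid_commute_iff:
  assumes "A \<in> carrier_mat d d" "i \<in> {1..2*n}" "j \<in> {1..2*n}"
  shows "A * braid n \<gamma> i j = braid n \<gamma> i j * A \<longleftrightarrow> A * (\<gamma> i * \<gamma> j) = (\<gamma> i * \<gamma> j) * A"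
  unfolding braid_def
  by (rule commute_smult_one_minus_iff[OF assms(1) mult_carrier_mat[OF gamma_carrier gamma_carrier]])
    (use assms in simp_all)

lemma P_O_set_commute_monomial:
  assumes S: "S \<subseteq> {1..2*n}" and M: "M \<in> P_set n \<gamma> S \<union> O_set n \<gamma> S"
  shows "M * monomial S = monomial S * M"
  using M
proof (cases rule: P_O_set_cases)
  case (braid i j)
  have i: "i \<in> {1..2*n}" and j: "j \<in> {1..2*n}"
    using braid(2) S by auto
  have "even (card (S - {i}) + card (S - {j}))"
    using braid(2) finite_subset[OF S] by auto
  then have "(\<gamma> i * \<gamma> j) * monomial S = monomial S * (\<gamma> i * \<gamma> j)"
    using sign_commute_mult_left[OF gamma_carrier[OF i] gamma_carrier[OF j] monomial_carrier[OF S]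
        gamma_commute_monomial[OF S i] gamma_commute_monomial[OF S j]]
    by (simp add: power_add[symmetric])
  then show ?thesis
    using braid_commute_iff[OF monomial_carrier[OF S] i j] braid(3) by simp
next
  case (single j)
  have j: "j \<in> {1..2*n}"
    using single(1) S by (auto split: if_splits)
  have "even (card (S - {j}))"
    using single(1) finite_subset[OF S] by (auto split: if_splits)
  then show ?thesis
    using gamma_commute_monomial[OF S j] single(2) by simp
qed

lemma mat_trace_monomial_inv_vanishes:
  assumes S: "S \<subseteq> {1..2*n}" "S \<noteq> {}" "S \<noteq> {1..2*n}"
    and A: "A \<in> commutant n (P_set n \<gamma> S \<union> O_set n \<gamma> S)"
    and T: "T \<subseteq> {1..2*n}" "T \<noteq> {}" "T \<noteq> S"
  shows "mat_trace (monomial_inv T * A) = 0"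
proof -
  have A_car: "A \<in> carrier_mat d d" and A_comm: "\<And>M. M \<in> P_set n \<gamma> S \<union> O_set n \<gamma> S \<Longrightarrow> A * M = M * A"
    using A unfolding commutant_def by auto
  consider (pair) i j where "i \<in> T" "j \<notin> T" "{i, j} \<subseteq> S \<or> {i, j} \<subseteq> {1..2*n} - S"
    | (single) j where "j \<in> (if even (card S) then {1..2*n} - S else S)" "odd (card (T - {j}))"
    using separating_pair_or_index[OF _ _ S T] by auto
  then show ?thesis
  proof cases
    case pair
    have i: "i \<in> {1..2*n}" and j: "j \<in> {1..2*n}" and ij: "i \<noteq> j"
      using pair S by auto
    have "braid n \<gamma> i j \<in> P_set n \<gamma> S"
      using pair ij unfolding P_set_def by blast
    then have "A * (\<gamma> i * \<gamma> j) = (\<gamma> i * \<gamma> j) * A"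
      using A_comm braid_commute_iff[OF A_car i j] by blast
    moreover have "(\<gamma> i * \<gamma> j) * monomial_inv T = (-1) \<cdot>\<^sub>m (monomial_inv T * (\<gamma> i * \<gamma> j))"
      using sign_commute_mult_left[OF gamma_carrier[OF i] gamma_carrier[OF j] monomial_inv_carrier[OF T(1)]
          gamma_commute_monomial_inv[OF T(1) i] gamma_commute_monomial_inv[OF T(1) j]]
        odd_card_remove_in_out[OF finite_subset[OF T(1)] pair(1,2)]
      by (simp add: power_add[symmetric])
    ultimately show ?thesis
      by (intro mat_trace_eq_zero_if_commutes_anticommutes[OF
            mult_carrier_mat[OF gamma_carrier[OF i] gamma_carrier[OF j]]
            mult_carrier_mat[OF gamma_carrier[OF j] gamma_carrier[OF i]]
            gamma_pair_inverse[OF i j] monomial_inv_carrier[OF T(1)] A_car])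
  next
    case single
    have j: "j \<in> {1..2*n}"
      using single(1) S by (auto split: if_splits)
    have "\<gamma> j \<in> O_set n \<gamma> S"
      using single(1) unfolding O_set_def by (auto split: if_splits)
    then show ?thesis
      using A_comm gamma_commute_monomial_inv[OF T(1) j] single(2)
      by (intro mat_trace_eq_zero_if_commutes_anticommutes[OF gamma_carrier[OF j] gamma_carrier[OF j]
            gamma_square[OF j] monomial_inv_carrier[OF T(1)] A_car]) simp_all
  qed
qed

lemma commutant_subset_span2_monomial:
  assumes S: "S \<subseteq> {1..2*n}" "S \<noteq> {}" "S \<noteq> {1..2*n}"
  shows "commutant n (P_set n \<gamma> S \<union> O_set n \<gamma> S) \<subseteq> span2 n (monomial S)"
proof
  fix A assume A: "A \<in> commutant n (P_set n \<gamma> S \<union> O_set n \<gamma> S)"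
  then have A_car: "A \<in> carrier_mat d d"
    unfolding commutant_def by auto
  define coeff where "coeff T = mat_trace (monomial_inv T * A) / of_nat d" for T
  have "A = coeff {} \<cdot>\<^sub>m 1\<^sub>m d + coeff S \<cdot>\<^sub>m monomial S"
  proof (rule eq_matI)
    fix i j assume "i < dim_row (coeff {} \<cdot>\<^sub>m 1\<^sub>m d + coeff S \<cdot>\<^sub>m monomial S)"
      "j < dim_col (coeff {} \<cdot>\<^sub>m 1\<^sub>m d + coeff S \<cdot>\<^sub>m monomial S)"
    then have ij: "i < d" "j < d"
      using monomial_carrier[OF S(1)] by auto
    have "of_nat d * A $$ (i, j) = (\<Sum>T\<in>{{}, S}. mat_trace (monomial_inv T * A) * monomial T $$ (i, j))"
      unfolding monomial_expansion[OF A_car ij, symmetric]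
      using mat_trace_monomial_inv_vanishes[OF S A] S(1)
      by (intro sum.mono_neutral_right) auto
    then show "A $$ (i, j) = (coeff {} \<cdot>\<^sub>m 1\<^sub>m d + coeff S \<cdot>\<^sub>m monomial S) $$ (i, j)"
      using ij S(2) monomial_carrier[OF S(1)] by (simp add: coeff_def monomial_empty field_simps)
  qed (use A_car monomial_carrier[OF S(1)] in auto)
  then show "A \<in> span2 n (monomial S)"
    unfolding span2_def by blast
qed

lemma gammaS_carrier: "S \<subseteq> {1..2*n} \<Longrightarrow> gammaS n \<gamma> S \<in> carrier_mat d d"
  by (simp add: gammaS_eq_monomial monomial_carrier)

lemma P_O_set_carrier: "S \<subseteq> {1..2*n} \<Longrightarrow> M \<in> P_set n \<gamma> S \<union> O_set n \<gamma> S \<Longrightarrow> M \<in> carrier_mat d d"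
  using P_O_set_subset_generators generator_unitary by blast

lemma P_O_set_commute_gammaS:
  assumes S: "S \<subseteq> {1..2*n}" and M: "M \<in> P_set n \<gamma> S \<union> O_set n \<gamma> S"
  shows "M * gammaS n \<gamma> S = gammaS n \<gamma> S * M"
  using P_O_set_commute_monomial[OF S M] P_O_set_carrier[OF S M] monomial_carrier[OF S]
  by (simp add: gammaS_eq_monomial mult_smult_distrib[of M d d] mult_smult_assoc_mat[of _ d d M d])

lemma P_O_set_subset_stabilizer:
  assumes S: "S \<subseteq> {1..2*n}"
  shows "P_set n \<gamma> S \<union> O_set n \<gamma> S \<subseteq> stabilizer n \<gamma> S"
proof
  fix M assume M: "M \<in> P_set n \<gamma> S \<union> O_set n \<gamma> S"
  have gen: "M \<in> generators n \<gamma>"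
    using P_O_set_subset_generators[OF S] M by blast
  have "M * 1\<^sub>m d \<in> gen_group n \<gamma>"
    by (rule gen_group.gen_mult[OF gen gen_group.gen_one])
  then have "M \<in> gen_group n \<gamma>"
    using P_O_set_carrier[OF S M] by simp
  moreover have "M * gammaS n \<gamma> S * mat_adjoint M = gammaS n \<gamma> S"
    using conj_fixed_iff_commute[OF _ gammaS_carrier[OF S]] generator_unitary[OF gen]
      P_O_set_commute_gammaS[OF S M] by blast
  ultimately show "M \<in> stabilizer n \<gamma> S"
    unfolding stabilizer_def by blast
qed

lemma stabilizer_commute_gammaS:
  assumes S: "S \<subseteq> {1..2*n}" and U: "U \<in> stabilizer n \<gamma> S"
  shows "U \<in> carrier_mat d d \<and> U * gammaS n \<gamma> S = gammaS n \<gamma> S * U"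
  using U gen_group_unitary conj_fixed_iff_commute[OF _ gammaS_carrier[OF S]]
  unfolding stabilizer_def by blast

end

theorem mainTheorem14:
  fixes n :: nat and \<gamma> :: "nat \<Rightarrow> complex mat" and S :: "nat set"
  assumes "majorana_family n \<gamma>"
    and "S \<subseteq> {1..2*n}" and "1 \<le> card S" and "card S \<le> 2*n - 1"
  shows "(\<forall>M \<in> P_set n \<gamma> S \<union> O_set n \<gamma> S. M * gammaS n \<gamma> S = gammaS n \<gamma> S * M)
       \<and> commutant n (P_set n \<gamma> S \<union> O_set n \<gamma> S) = span2 n (gammaS n \<gamma> S)
       \<and> commutant n (stabilizer n \<gamma> S) = span2 n (gammaS n \<gamma> S)"
proof -
  interpret majorana n \<gamma>
    by (rule majorana.intro) fact
  let ?PO = "P_set n \<gamma> S \<union> O_set n \<gamma> S" and ?G = "gammaS n \<gamma> S"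
  have S: "S \<subseteq> {1..2*n}" "S \<noteq> {}" "S \<noteq> {1..2*n}"
    using assms(2-4) by auto
  have comm: "\<forall>M \<in> ?PO. M * ?G = ?G * M"
    using P_O_set_commute_gammaS[OF S(1)] by blast
  have span: "span2 n ?G = span2 n (monomial S)"
    by (simp add: gammaS_eq_monomial span2_smult)
  have "span2 n ?G \<subseteq> commutant n (stabilizer n \<gamma> S)"
    by (intro span2_subset_commutant gammaS_carrier[OF S(1)] stabilizer_commute_gammaS[OF S(1)])
  moreover have "commutant n (stabilizer n \<gamma> S) \<subseteq> commutant n ?PO"
    by (intro commutant_antimono P_O_set_subset_stabilizer[OF S(1)])
  moreover have "commutant n ?PO \<subseteq> span2 n ?G"
    using commutant_subset_span2_monomial[OF S] span by simp
  moreover have "span2 n ?G \<subseteq> commutant n ?PO"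
    using span2_subset_commutant[OF gammaS_carrier[OF S(1)]] comm P_O_set_carrier[OF S(1)] by blast
  ultimately show ?thesis
    using comm by blast
qed

end
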